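(* Let $n>2$ and $q>0$ be integers such that $n$ is even or $q$ is odd, and let $p>\max\{n,(q-1)n+1\}$ be a prime. Then $$ \sum_{k=0}^{p-q}\frac{(q)_k^n}{(1)_k^n}\left(H_k^{(1)}-H_{q+k-1}^{(1)}\right)\equiv0\pmod{p} $$ and $$ \sum_{k=0}^{p-q}\frac{(q)_k^n}{(1)_k^n}\left((H_k^{(1)})^2-(H_{q+k-1}^{(1)})^2\right)\equiv0\pmod{p}. $$
   Context: $(x)_k$ denotes the Pochhammer symbol: $(x)_0=1$ and $(x)_k=x(x+1)\cdots(x+k-1)$ for $k>0$. $H_k^{(1)}=\sum_{j=1}^k 1/j$ is the $k$th harmonic number (with $H_0^{(1)}=0$). A congruence between rational numbers modulo $p^m$ means their difference lies in $p^m\mathbb{Z}_{(p)}$, where $\mathbb{Z}_{(p)}$ is the ring of rationals whose denominators are coprime to $p$. *)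

theory Defs
  imports Complex_Main "HOL-Computational_Algebra.Primes"
begin

definition harmonic :: "nat \<Rightarrow> rat" where
  "harmonic k = (\<Sum>j=1..k. 1 / of_nat j)"

text \<open>x lies in p Z_(p): x = a/b with p not dividing b and p dividing a.\<close>
definition rat_cong_zero :: "nat \<Rightarrow> rat \<Rightarrow> bool" where
  "rat_cong_zero p x \<longleftrightarrow>
     (\<exists>a b. b \<noteq> 0 \<and> x = of_int a / of_int b \<and> \<not> int p dvd b \<and> int p dvd a)"

end

theory Submission
  imports Defs
begin

text \<open>
  The weight \<open>(q)_k/k!\<close> is the binomial coefficient \<open>C(k+q-1, q-1)\<close>. Since
  \<open>p-1-k \<equiv> -(k+1)\<close> mod \<open>p\<close>, the reflection \<open>k \<mapsto> p-q-k\<close> multiplies it by \<open>(-1)^(q-1)\<close>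
  mod \<open>p\<close>, so its \<open>n\<close>-th power is invariant because \<open>(q-1)n\<close> is even. Pairing \<open>1/m\<close>
  with \<open>1/(p-m) \<equiv> -1/m\<close> gives \<open>H_(p-1) \<equiv> 0\<close> and \<open>H_(p-1-j) \<equiv> H_j\<close>, so the reflection
  swaps \<open>H_k\<close> and \<open>H_(q+k-1)\<close>. Hence each summand \<open>w_k (H_k^m - H_(q+k-1)^m)\<close> changes
  sign under the reflection, twice the sum is \<open>\<equiv> 0\<close>, and \<open>p\<close> is odd.
\<close>

definition p_integral :: "nat \<Rightarrow> rat \<Rightarrow> bool" where
  "p_integral p x \<longleftrightarrow> (\<exists>a b. b \<noteq> 0 \<and> x = of_int a / of_int b \<and> \<not> int p dvd b)"

definition rat_cong :: "nat \<Rightarrow> rat \<Rightarrow> rat \<Rightarrow> bool" where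
  "rat_cong p x y \<longleftrightarrow> rat_cong_zero p (x - y)"

lemma harmonic_Suc: "harmonic (Suc m) = harmonic m + 1 / of_nat (Suc m)"
  by (simp add: harmonic_def)

context
  fixes p :: nat
  assumes prime_p: "prime p"
begin

lemma prime_not_dvd_mult:
  assumes "\<not> int p dvd b" "\<not> int p dvd d"
  shows "\<not> int p dvd (b * d)"
  using assms prime_p prime_dvd_mult_iff[of "int p"] by auto

lemma p_integral_add:
  assumes "p_integral p x" "p_integral p y"
  shows "p_integral p (x + y)"
proof -
  obtain a b where "b \<noteq> 0" "x = of_int a / of_int b" "\<not> int p dvd b"
    using assms(1) unfolding p_integral_def by blast
  moreover obtain c d where "d \<noteq> 0" "y = of_int c / of_int d" "\<not> int p dvd d"
    using assms(2) unfolding p_integral_def by blast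
  ultimately show ?thesis
    unfolding p_integral_def using prime_not_dvd_mult
    by (intro exI[of _ "a * d + c * b"] exI[of _ "b * d"]) (simp add: field_simps)
qed

lemma p_integral_mult:
  assumes "p_integral p x" "p_integral p y"
  shows "p_integral p (x * y)"
proof -
  obtain a b where "b \<noteq> 0" "x = of_int a / of_int b" "\<not> int p dvd b"
    using assms(1) unfolding p_integral_def by blast
  moreover obtain c d where "d \<noteq> 0" "y = of_int c / of_int d" "\<not> int p dvd d"
    using assms(2) unfolding p_integral_def by blast
  ultimately show ?thesis
    unfolding p_integral_def using prime_not_dvd_mult
    by (intro exI[of _ "a * c"] exI[of _ "b * d"]) simp
qed

lemma p_integral_divide_of_nat:
  assumes "p_integral p x" "\<not> p dvd j"
  shows "p_integral p (x / of_nat j)"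
proof -
  obtain a b where "b \<noteq> 0" "x = of_int a / of_int b" "\<not> int p dvd b"
    using assms(1) unfolding p_integral_def by blast
  moreover have "j \<noteq> 0" "\<not> int p dvd int j"
    using assms(2) by (metis dvd_0_right, simp)
  ultimately show ?thesis
    unfolding p_integral_def using prime_not_dvd_mult
    by (intro exI[of _ a] exI[of _ "b * int j"]) simp
qed

lemma p_integral_of_int: "p_integral p (of_int a)"
  unfolding p_integral_def using prime_p
  by (intro exI[of _ a] exI[of _ 1]) (simp add: prime_nat_iff)

lemma p_integral_of_nat: "p_integral p (of_nat a)"
  using p_integral_of_int[of "int a"] by simp

lemma p_integral_one: "p_integral p 1"
  using p_integral_of_nat[of 1] by simp

lemma p_integral_minus: "p_integral p x \<Longrightarrow> p_integral p (- x)"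
  using p_integral_mult[OF p_integral_of_int[of "-1"]] by simp

lemma p_integral_diff: "p_integral p x \<Longrightarrow> p_integral p y \<Longrightarrow> p_integral p (x - y)"
  using p_integral_add[of x "- y"] p_integral_minus[of y] by simp

lemma p_integral_power: "p_integral p x \<Longrightarrow> p_integral p (x ^ n)"
  by (induction n) (auto intro: p_integral_mult p_integral_one)

lemma p_integral_sum: "(\<And>i. i \<in> A \<Longrightarrow> p_integral p (f i)) \<Longrightarrow> p_integral p (sum f A)"
  by (induction A rule: infinite_finite_induct)
    (auto intro: p_integral_add p_integral_of_nat[of 0, simplified])

lemma p_integral_prod: "(\<And>i. i \<in> A \<Longrightarrow> p_integral p (f i)) \<Longrightarrow> p_integral p (prod f A)"
  by (induction A rule: infinite_finite_induct) (auto intro: p_integral_mult p_integral_one)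

lemma rat_cong_zero_iff: "rat_cong_zero p x \<longleftrightarrow> p_integral p (x / of_nat p)"
proof
  assume "rat_cong_zero p x"
  then obtain a b where "b \<noteq> 0" "x = of_int a / of_int b" "\<not> int p dvd b" "int p dvd a"
    unfolding rat_cong_zero_def by blast
  moreover from \<open>int p dvd a\<close> obtain c where "a = int p * c" ..
  ultimately show "p_integral p (x / of_nat p)"
    unfolding p_integral_def using prime_gt_0_nat[OF prime_p]
    by (intro exI[of _ c] exI[of _ b]) simp
next
  assume "p_integral p (x / of_nat p)"
  then obtain a b where "b \<noteq> 0" "x / of_nat p = of_int a / of_int b" "\<not> int p dvd b"
    unfolding p_integral_def by blast
  then show "rat_cong_zero p x"
    unfolding rat_cong_zero_def using prime_gt_0_nat[OF prime_p]
    by (intro exI[of _ "int p * a"] exI[of _ b]) (simp add: field_simps)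
qed

lemma rat_cong_zero_add:
  "rat_cong_zero p x \<Longrightarrow> rat_cong_zero p y \<Longrightarrow> rat_cong_zero p (x + y)"
  unfolding rat_cong_zero_iff using p_integral_add by (simp add: add_divide_distrib)

lemma rat_cong_zero_mult:
  "p_integral p x \<Longrightarrow> rat_cong_zero p y \<Longrightarrow> rat_cong_zero p (x * y)"
  unfolding rat_cong_zero_iff by (metis p_integral_mult times_divide_eq_right)

lemma rat_cong_zero_minus: "rat_cong_zero p x \<Longrightarrow> rat_cong_zero p (- x)"
  using rat_cong_zero_mult[OF p_integral_of_int[of "-1"]] by simp

lemma rat_cong_zero_diff:
  "rat_cong_zero p x \<Longrightarrow> rat_cong_zero p y \<Longrightarrow> rat_cong_zero p (x - y)"
  using rat_cong_zero_add[OF _ rat_cong_zero_minus] by simp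

lemma rat_cong_zero_sum:
  "(\<And>i. i \<in> A \<Longrightarrow> rat_cong_zero p (f i)) \<Longrightarrow> rat_cong_zero p (sum f A)"
  unfolding rat_cong_zero_iff sum_divide_distrib by (rule p_integral_sum)

lemma rat_cong_zero_of_nat_prime: "rat_cong_zero p (of_nat p)"
  unfolding rat_cong_zero_iff using prime_gt_0_nat[OF prime_p] p_integral_of_nat[of 1] by simp

lemma rat_cong_zero_half:
  assumes "odd p" "rat_cong_zero p (2 * x)"
  shows "rat_cong_zero p x"
proof -
  have "\<not> p dvd 2"
    using assms(1) prime_p by (metis primes_dvd_imp_eq two_is_prime_nat even_numeral)
  then have "p_integral p (2 * x / of_nat p / of_nat 2)"
    using assms(2) p_integral_divide_of_nat unfolding rat_cong_zero_iff by blast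
  then show ?thesis
    unfolding rat_cong_zero_iff by simp
qed

lemma rat_cong_refl: "rat_cong p x x"
  unfolding rat_cong_def rat_cong_zero_iff using p_integral_of_nat[of 0] by simp

lemma rat_cong_sym: "rat_cong p x y \<Longrightarrow> rat_cong p y x"
  unfolding rat_cong_def using rat_cong_zero_minus[of "x - y"] by simp

lemma rat_cong_trans: "rat_cong p x y \<Longrightarrow> rat_cong p y z \<Longrightarrow> rat_cong p x z"
  unfolding rat_cong_def using rat_cong_zero_add[of "x - y" "y - z"] by simp

lemma rat_cong_add: "rat_cong p x x' \<Longrightarrow> rat_cong p y y' \<Longrightarrow> rat_cong p (x + y) (x' + y')"
  unfolding rat_cong_def using rat_cong_zero_add[of "x - x'" "y - y'"] by (simp add: algebra_simps)

lemma rat_cong_diff: "rat_cong p x x' \<Longrightarrow> rat_cong p y y' \<Longrightarrow> rat_cong p (x - y) (x' - y')"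
  unfolding rat_cong_def using rat_cong_zero_diff[of "x - x'" "y - y'"] by (simp add: algebra_simps)

lemma rat_cong_mult:
  assumes "p_integral p x" "p_integral p y'" "rat_cong p x x'" "rat_cong p y y'"
  shows "rat_cong p (x * y) (x' * y')"
proof -
  have "x * y - x' * y' = x * (y - y') + y' * (x - x')"
    by (simp add: algebra_simps)
  then show ?thesis
    using assms rat_cong_zero_add[OF rat_cong_zero_mult rat_cong_zero_mult] unfolding rat_cong_def
    by simp
qed

lemma rat_cong_power:
  "p_integral p x \<Longrightarrow> p_integral p x' \<Longrightarrow> rat_cong p x x' \<Longrightarrow> rat_cong p (x ^ n) (x' ^ n)"
  by (induction n) (auto intro: rat_cong_mult rat_cong_refl p_integral_power)

lemma rat_cong_prod:
  "(\<And>i. i \<in> A \<Longrightarrow> p_integral p (f i) \<and> p_integral p (g i) \<and> rat_cong p (f i) (g i))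
   \<Longrightarrow> rat_cong p (prod f A) (prod g A)"
  by (induction A rule: infinite_finite_induct) (auto intro: rat_cong_mult rat_cong_refl p_integral_prod)

lemma p_integral_harmonic: "j < p \<Longrightarrow> p_integral p (harmonic j)"
  unfolding harmonic_def
  by (intro p_integral_sum p_integral_divide_of_nat p_integral_one) (auto dest: dvd_imp_le)

lemma rat_cong_zero_inverse_add_inverse_complement:
  assumes "0 < m" "m < p"
  shows "rat_cong_zero p (1 / of_nat m + 1 / of_nat (p - m))"
proof -
  have "(1 / of_nat m + 1 / of_nat (p - m)) / of_nat p = (1 :: rat) / of_nat m / of_nat (p - m)"
    using assms by (simp add: of_nat_diff field_simps)
  moreover have "\<not> p dvd m" "\<not> p dvd (p - m)"
    using assms by (auto dest: dvd_imp_le)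
  ultimately show ?thesis
    unfolding rat_cong_zero_iff
    by (metis p_integral_divide_of_nat[OF p_integral_divide_of_nat[OF p_integral_one]])
qed

lemma rat_cong_harmonic_complement:
  "j \<le> p - 1 \<Longrightarrow> rat_cong p (harmonic (p - 1 - j)) (harmonic (p - 1) + harmonic j)"
proof (induction j)
  case 0
  show ?case
    using rat_cong_refl by (simp add: harmonic_def)
next
  case (Suc j)
  have "p - 1 - j = Suc (p - 1 - Suc j)" "Suc (p - 1 - Suc j) = p - Suc j"
    using Suc.prems by arith+
  then have "harmonic (p - 1 - j) = harmonic (p - 1 - Suc j) + 1 / of_nat (p - Suc j)"
    by (metis harmonic_Suc)
  then have "harmonic (p - 1 - Suc j) - (harmonic (p - 1) + harmonic (Suc j))
      = (harmonic (p - 1 - j) - (harmonic (p - 1) + harmonic j))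
        - (1 / of_nat (Suc j) + 1 / of_nat (p - Suc j))"
    by (simp add: harmonic_Suc)
  moreover have "rat_cong_zero p (1 / of_nat (Suc j) + 1 / of_nat (p - Suc j))"
    using Suc.prems prime_gt_0_nat[OF prime_p]
    by (intro rat_cong_zero_inverse_add_inverse_complement) auto
  moreover have "rat_cong_zero p (harmonic (p - 1 - j) - (harmonic (p - 1) + harmonic j))"
    using Suc unfolding rat_cong_def by simp
  ultimately show ?case
    unfolding rat_cong_def by (metis rat_cong_zero_diff)
qed

lemma rat_cong_zero_harmonic_prime_minus_one:
  assumes "odd p"
  shows "rat_cong_zero p (harmonic (p - 1))"
proof -
  \<comment> \<open>the complement congruence at \<open>j = p - 1\<close> reads \<open>0 = H\<^sub>0 \<equiv> 2 H\<^sub>p\<^sub>-\<^sub>1\<close>\<close>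
  have "rat_cong p (2 * harmonic (p - 1)) 0"
    using rat_cong_sym[OF rat_cong_harmonic_complement[of "p - 1"]] by (simp add: harmonic_def)
  then show ?thesis
    using rat_cong_zero_half[OF assms] unfolding rat_cong_def by simp
qed

lemma rat_cong_harmonic_reflect:
  assumes "odd p" "j \<le> p - 1"
  shows "rat_cong p (harmonic (p - 1 - j)) (harmonic j)"
proof -
  have "rat_cong p (harmonic (p - 1) + harmonic j) (0 + harmonic j)"
    using rat_cong_zero_harmonic_prime_minus_one[OF assms(1)]
    by (intro rat_cong_add rat_cong_refl) (simp add: rat_cong_def)
  then show ?thesis
    using rat_cong_trans[OF rat_cong_harmonic_complement[OF assms(2)]] by simp
qed

lemma rat_cong_divide_of_nat:
  "rat_cong p x y \<Longrightarrow> \<not> p dvd j \<Longrightarrow> rat_cong p (x / of_nat j) (y / of_nat j)"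
  unfolding rat_cong_def rat_cong_zero_iff
  by (metis p_integral_divide_of_nat diff_divide_distrib divide_divide_eq_left mult.commute)

lemma rat_cong_gbinomial:
  assumes "p_integral p x" "p_integral p y" "rat_cong p x y" "k < p"
  shows "rat_cong p (x gchoose k) (y gchoose k)"
  unfolding gbinomial_altdef_of_nat
proof (rule rat_cong_prod)
  fix i assume "i \<in> {0..<k}"
  then have "\<not> p dvd (k - i)"
    using assms(4) by (auto dest: dvd_imp_le)
  then show "p_integral p ((x - of_nat i) / of_nat (k - i)) \<and> p_integral p ((y - of_nat i) / of_nat (k - i))
      \<and> rat_cong p ((x - of_nat i) / of_nat (k - i)) ((y - of_nat i) / of_nat (k - i))"
    using assms(1-3)
    by (auto intro: p_integral_divide_of_nat p_integral_diff p_integral_of_nat rat_cong_divide_of_nat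
        rat_cong_diff rat_cong_refl)
qed

lemma rat_cong_binomial_reflect:
  assumes "j < p" "r < p"
  shows "rat_cong p (of_nat ((p - 1 - j) choose r)) ((-1) ^ r * of_nat ((j + r) choose r))"
proof -
  have "of_nat (p - 1 - j) - (- (of_nat j + 1)) = (of_nat p :: rat)"
    using assms(1) by (simp add: of_nat_diff)
  then have "rat_cong p (of_nat (p - 1 - j)) (- (of_nat j + 1))"
    unfolding rat_cong_def using rat_cong_zero_of_nat_prime by simp
  moreover have "p_integral p (- (of_nat j + 1))"
    using p_integral_of_int[of "- (int j + 1)"] by simp
  ultimately have "rat_cong p (of_nat (p - 1 - j) gchoose r) ((- (of_nat j + 1)) gchoose r)"
    using assms(2) p_integral_of_nat by (intro rat_cong_gbinomial)
  moreover have "(- (of_nat j + 1)) gchoose r = (-1) ^ r * (of_nat (j + r) gchoose r :: rat)"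
    by (subst gbinomial_negated_upper) (simp add: algebra_simps)
  ultimately show ?thesis
    by (simp add: binomial_gbinomial)
qed

lemma rat_cong_zero_sum_antisymmetric:
  fixes f :: "nat \<Rightarrow> rat"
  assumes "odd p" and reflect: "\<And>k. k \<le> N \<Longrightarrow> rat_cong p (f (N - k)) (- f k)"
  shows "rat_cong_zero p (\<Sum>k=0..N. f k)"
proof -
  have "2 * (\<Sum>k=0..N. f k) = (\<Sum>k=0..N. f (N - k) + f k)"
    using sum.atLeastAtMost_rev[of f 0 N] by (simp add: sum.distrib)
  moreover have "rat_cong_zero p (\<Sum>k=0..N. f (N - k) + f k)"
    using reflect unfolding rat_cong_def by (intro rat_cong_zero_sum) simp
  ultimately show ?thesis
    using rat_cong_zero_half[OF assms(1)] by simp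
qed

lemma rat_cong_zero_binomial_harmonic_sum:
  assumes "odd p" "r < p" "even (r * n)"
  shows "rat_cong_zero p
    (\<Sum>k=0..p-1-r. of_nat ((k + r) choose r) ^ n * (harmonic k ^ m - harmonic (k + r) ^ m))"
proof (rule rat_cong_zero_sum_antisymmetric[OF assms(1)])
  fix k assume k: "k \<le> p - 1 - r"
  define c :: "nat \<Rightarrow> rat" where "c k = of_nat ((k + r) choose r)" for k
  define d :: "nat \<Rightarrow> rat" where "d k = harmonic k ^ m - harmonic (k + r) ^ m" for k
  have index: "p - 1 - r - k + r = p - 1 - k" "p - 1 - (k + r) = p - 1 - r - k" "k + r < p"
    using k assms(2) by auto
  have "rat_cong p (c (p - 1 - r - k)) ((-1) ^ r * c k)"
    unfolding c_def index(1) using index(3) assms(2) by (intro rat_cong_binomial_reflect) auto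
  then have "rat_cong p (c (p - 1 - r - k) ^ n) (((-1) ^ r * c k) ^ n)"
    using p_integral_of_nat p_integral_of_int[of "(-1) ^ r * int ((k + r) choose r)"]
    unfolding c_def by (intro rat_cong_power) auto
  moreover have "((-1) ^ r * c k) ^ n = c k ^ n"
    using assms(3) by (simp add: power_mult_distrib power_mult[symmetric])
  ultimately have coeff: "rat_cong p (c (p - 1 - r - k) ^ n) (c k ^ n)"
    by simp
  have "rat_cong p (harmonic (p - 1 - r - k)) (harmonic (k + r))"
    "rat_cong p (harmonic (p - 1 - r - k + r)) (harmonic k)"
    using rat_cong_harmonic_reflect[OF assms(1), of "k + r"] rat_cong_harmonic_reflect[OF assms(1), of k]
      index by auto
  then have "rat_cong p (d (p - 1 - r - k)) (- d k)"
    unfolding d_def minus_diff_eq using index(3)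
    by (intro rat_cong_diff rat_cong_power p_integral_harmonic) auto
  then have "rat_cong p (c (p - 1 - r - k) ^ n * d (p - 1 - r - k)) (c k ^ n * - d k)"
    using coeff index(3) unfolding d_def c_def
    by (intro rat_cong_mult p_integral_power p_integral_of_nat p_integral_minus p_integral_diff
        p_integral_harmonic) auto
  then show "rat_cong p (c (p - 1 - r - k) ^ n * d (p - 1 - r - k)) (- (c k ^ n * d k))"
    by simp
qed

end

lemma pochhammer_divide_pochhammer_one:
  assumes "0 < q"
  shows "pochhammer (of_nat q) k / pochhammer 1 k
    = (of_nat ((k + (q - 1)) choose (q - 1)) :: 'a :: field_char_0)"
proof -
  have "pochhammer (of_nat q) k / pochhammer 1 k = (of_nat (k + (q - 1)) gchoose k :: 'a)"
    using assms by (simp add: gbinomial_pochhammer' pochhammer_fact of_nat_diff)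
  also have "\<dots> = of_nat ((k + (q - 1)) choose k)"
    by (rule binomial_gbinomial[symmetric])
  also have "\<dots> = of_nat ((k + (q - 1)) choose (q - 1))"
    using binomial_symmetric[of k "k + (q - 1)"] by simp
  finally show ?thesis .
qed

theorem lemma3p1:
  fixes n q p :: nat
  assumes "n > 2" and "q > 0" and "even n \<or> odd q"
    and "prime p" and "p > max n ((q - 1) * n + 1)"
  shows "rat_cong_zero p
           (\<Sum>k=0..p-q. (pochhammer (of_nat q) k ^ n / pochhammer 1 k ^ n)
                         * (harmonic k - harmonic (q + k - 1)))
       \<and> rat_cong_zero p
           (\<Sum>k=0..p-q. (pochhammer (of_nat q) k ^ n / pochhammer 1 k ^ n)
                         * (harmonic k ^ 2 - harmonic (q + k - 1) ^ 2))"
proof -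
  \<comment> \<open>of the hypotheses on \<open>p\<close>, only \<open>odd p\<close> and \<open>q - 1 < p\<close> are used\<close>
  define r where "r = q - 1"
  have "r * n + 1 < p"
    using assms(5) unfolding r_def by simp
  moreover have "r \<le> r * n"
    using assms(1) by simp
  ultimately have "r < p"
    by linarith
  moreover have "odd p"
    using assms(1,4,5) by (intro prime_odd_nat) auto
  moreover have "even (r * n)"
    using assms(2,3) unfolding r_def by auto
  ultimately have sums: "rat_cong_zero p
      (\<Sum>k=0..p-1-r. of_nat ((k + r) choose r) ^ n * (harmonic k ^ m - harmonic (k + r) ^ m))"
    for m
    using rat_cong_zero_binomial_harmonic_sum[OF assms(4)] by blast
  have "pochhammer (of_nat q) k ^ n / pochhammer 1 k ^ n = (of_nat ((k + r) choose r) ^ n :: rat)"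
    for k
    unfolding r_def power_divide[symmetric] pochhammer_divide_pochhammer_one[OF assms(2)] ..
  moreover have "q + k - 1 = k + r" "p - q = p - 1 - r" for k
    using assms(2) unfolding r_def by simp_all
  ultimately show ?thesis
    using sums[of 1] sums[of 2] by simp
qed

end
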